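(* Let $n\ge1$ and $\lambda\in\mathcal O(n)$, and let $\mu=\mathrm{Syl}(\lambda)\in\mathcal D(n)$ be the image of $\lambda$ under Sylvester's bijection. Then $\lambda^2\in\mathcal O(2n)$ and $\Phi(\lambda^2)=2\mu:=(2\mu_1,2\mu_2,\dots,2\mu_{\ell(\mu)})$.
   Context: A partition $\lambda$ of $n$ is a non-increasing sequence $\lambda=(\lambda_1,\dots,\lambda_\ell)$ of positive integers with sum $n$; $\ell(\lambda)=\ell$ is its length, and by convention $\lambda_j=0$ for $j>\ell$. $\mathcal O(n)$ is the set of partitions of $n$ all of whose parts are odd; $\mathcal D(n)$ is the set of partitions of $n$ with distinct parts. $m_i(\lambda)$ is the multiplicity of $i$ as a part of $\lambda$. The conjugate $\lambda'$ is given by $\lambda'_i=\#\{j:\lambda_j\ge i\}$. For partitions $\alpha,\beta$, $\alpha\circ\beta$ is the partition whose parts are all parts of $\alpha$ and of $\beta$ in non-increasing order, and $\alpha^2=\alpha\circ\alpha=(\alpha_1,\alpha_1,\alpha_2,\alpha_2,\dots)$. Sylvester's bijection $\mathrm{Syl}:\mathcal O(n)\to\mathcal D(n)$: for $\lambda\in\mathcal O(n)$ let $d=\max\{j:\lambda_j\ge 2j-1\}$; set $\epsilon=0$ if $\lambda_d>2d-1$ and $\epsilon=1$ if $\lambda_d=2d-1$. Then $\mathrm{Syl}(\lambda)=\mu$ has $2d-\epsilon$ parts given by $\mu_{2j-1}=\frac{\lambda_j+1}{2}+\lambda'_{2j-1}-2j+1$ for $j=1,\dots,d$, and $\mu_{2j}=\frac{\lambda_j-1}{2}+\lambda'_{2j+1}-2j+1$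 for $j=1,\dots,d-\epsilon$. Bressoud's map $B$: for $\beta\in\mathcal O(n)\cap\mathcal D(n)$, decompose the parts of $\beta$ into runs (maximal sequences of consecutive odd integers all occurring as parts of $\beta$). For a run $2m-1>\dots>2m-2k+1$ form pairs $(2m-1,2m-3),(2m-5,2m-7),\dots$ from the largest term; if $k$ is odd the remaining smallest term $c$ becomes the pair $(\frac{c+1}{2},\frac{c-1}{2})$. Concatenate all pairs (runs in decreasing order) into $\pi=(\pi_1,\dots,\pi_{2s})$ with pairs $(\pi_{2j-1},\pi_{2j})$. A pair interchange replaces adjacent pairs $(a+1,a),(2b+1,2b-1)$ in positions $2j-1,\dots,2j+2$ with $a\le 2b+1$ by $(2b+3,2b+1,a-1,a-2)$. Apply pair interchanges (leftmost first) until none is possible and delete zero entries to get $B(\beta)$; $B$ of the empty partition is empty. Insertion: for a partition $\gamma$ (with $\gamma_k=0$ for $k>\ell(\gamma)$) and an integer $a\ge1$, define $I_a(\gamma)$: for $j=0,1,2,\dots$ in turn, if $j=a-1$ set $I_a(\gamma)=(\gamma_1+2,\dots,\gamma_{2j}+2,\gamma_{2j+1}+2,\gamma_{2j+2},\dots)$ and stop; otherwise, if $2a-2j-2>\gamma_{2j+1}$ set $I_a(\gamma)=(\gamma_1+2,\dots,\gamma_{2j}+2,2a-2j,2a-2j-2,\gamma_{2j+1},\gamma_{2j+2},\dots)$ and stop; otherwise pass to $j+1$. Zero entries are discarded. The map $\Phi:\mathcal O(n)\to\mathcal D(n)$: for $\lambda\in\mathcal O(n)$ write uniquely $\lambda=\alpha^2\circ\beta$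 with $\beta$ having distinct parts. Let $t=\ell(\alpha)$, $\alpha_i=2a_i-1$. Set $\gamma^{(0)}=B(\beta)$, $\gamma^{(i)}=I_{a_i}(\gamma^{(i-1)})$ for $i=1,\dots,t$, and $\Phi(\lambda)=\gamma^{(t)}$. *)

theory Defs
  imports Main "HOL-Library.While_Combinator"
begin

definition partitions :: "nat \<Rightarrow> nat list set" where
  "partitions n = {xs. sorted_wrt (\<ge>) xs \<and> (\<forall>x\<in>set xs. 0 < x) \<and> sum_list xs = n}"

definition OddParts :: "nat \<Rightarrow> nat list set" where
  "OddParts n = {xs \<in> partitions n. \<forall>x\<in>set xs. odd x}"

definition DistParts :: "nat \<Rightarrow> nat list set" where
  "DistParts n = {xs \<in> partitions n. distinct xs}"

text \<open>1-indexed part with the convention lam_j = 0 for j > length.\<close>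
definition part :: "nat list \<Rightarrow> nat \<Rightarrow> nat" where
  "part xs j = (if 1 \<le> j \<and> j \<le> length xs then xs ! (j - 1) else 0)"

definition conj_part :: "nat list \<Rightarrow> nat \<Rightarrow> nat" where
  "conj_part xs i = length (filter (\<lambda>x. i \<le> x) xs)"

definition psquare :: "nat list \<Rightarrow> nat list" where
  "psquare xs = concat (map (\<lambda>x. [x, x]) xs)"

definition syl_d :: "nat list \<Rightarrow> nat" where
  "syl_d lam = Max ({0} \<union> {j. 1 \<le> j \<and> j \<le> length lam \<and> 2 * j - 1 \<le> part lam j})"

definition Syl :: "nat list \<Rightarrow> nat list" where
  "Syl lam = (let d = syl_d lam;
      eps = (if part lam d = 2 * d - 1 then 1 else 0 :: nat);
      odd_entry = (\<lambda>j::nat. nat ((int (part lam j) + 1) div 2 + int (conj_part lam (2 * j - 1)) - 2 * int j + 1));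
      even_entry = (\<lambda>j::nat. nat ((int (part lam j) - 1) div 2 + int (conj_part lam (2 * j + 1)) - 2 * int j + 1))
    in concat (map (\<lambda>j. [odd_entry j] @ (if j \<le> d - eps then [even_entry j] else [])) [1..<d + 1]))"

text \<open>Decomposition of a decreasing list of distinct odd numbers into maximal runs
  of consecutive odd integers.\<close>
fun runs :: "nat list \<Rightarrow> nat list list" where
  "runs [] = []"
| "runs (x # xs) = (case runs xs of
      [] \<Rightarrow> [[x]]
    | r # rs \<Rightarrow> (if hd r + 2 = x then (x # r) # rs else [x] # r # rs))"

text \<open>Pairs formed from a run (flattened): (2m-1,2m-3),(2m-5,2m-7),...; a leftover
  smallest term c becomes ((c+1)/2,(c-1)/2).\<close>
fun pair_run :: "nat list \<Rightarrow> int list" where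
  "pair_run (a # b # rest) = int a # int b # pair_run rest"
| "pair_run [c] = [(int c + 1) div 2, (int c - 1) div 2]"
| "pair_run [] = []"

definition bress_pairs :: "nat list \<Rightarrow> int list" where
  "bress_pairs beta = concat (map pair_run (runs beta))"

text \<open>Leftmost pair interchange: (a+1,a),(2b+1,2b-1) with a \<le> 2b+1 becomes
  (2b+3,2b+1,a-1,a-2); pairs occupy positions (2j-1,2j).\<close>
fun interchange_step :: "int list \<Rightarrow> int list option" where
  "interchange_step (x1 # x2 # x3 # x4 # rest) =
     (if x1 = x2 + 1 \<and> odd x3 \<and> x4 = x3 - 2 \<and> x2 \<le> x3
      then Some ((x3 + 2) # x3 # (x2 - 1) # (x2 - 2) # rest)
      else map_option (\<lambda>r. x1 # x2 # r) (interchange_step (x3 # x4 # rest)))"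
| "interchange_step _ = None"

definition Bress :: "nat list \<Rightarrow> nat list" where
  "Bress beta = map nat (filter (\<lambda>x. x \<noteq> 0)
     (while (\<lambda>p. interchange_step p \<noteq> None) (\<lambda>p. the (interchange_step p)) (bress_pairs beta)))"

function ins_aux :: "nat \<Rightarrow> nat \<Rightarrow> nat list \<Rightarrow> nat list" where
  "ins_aux a j g =
     (if a \<le> j + 1 then map (\<lambda>x. x + 2) (take (2 * j + 1) g) @ drop (2 * j + 1) g
      else if 2 * a - 2 * j - 2 > g ! (2 * j)
      then map (\<lambda>x. x + 2) (take (2 * j) g) @ [2 * a - 2 * j, 2 * a - 2 * j - 2] @ drop (2 * j) g
      else ins_aux a (j + 1) g)"
  by pat_completeness auto
termination by (relation "measure (\<lambda>(a, j, g). a - j)") auto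

definition Ins :: "nat \<Rightarrow> nat list \<Rightarrow> nat list" where
  "Ins a gam = filter (\<lambda>x. x \<noteq> 0) (ins_aux a 0 (gam @ replicate (2 * a + 2) 0))"

text \<open>lam = alpha^2 o beta with beta having distinct parts: each part value i of
  multiplicity m contributes m div 2 copies of i to alpha and (m mod 2) copies to beta.\<close>
definition phi_alpha :: "nat list \<Rightarrow> nat list" where
  "phi_alpha lam = rev (sort (concat (map (\<lambda>i. replicate (count_list lam i div 2) i) (remdups lam))))"

definition phi_beta :: "nat list \<Rightarrow> nat list" where
  "phi_beta lam = rev (sort (filter (\<lambda>i. odd (count_list lam i)) (remdups lam)))"

definition Phi :: "nat list \<Rightarrow> nat list" where
  "Phi lam = foldl (\<lambda>gam x. Ins ((x + 1) div 2) gam) (Bress (phi_beta lam)) (phi_alpha lam)"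

end

theory Submission
  imports Defs "HOL-Library.Multiset"
begin

text \<open>Every part of \<open>\<lambda>\<^sup>2\<close> has even multiplicity, so \<open>\<beta>\<close> is empty and \<open>\<alpha> = \<lambda>\<close>:
  \<open>\<Phi>(\<lambda>\<^sup>2)\<close> arises from the empty partition by inserting the parts of \<open>\<lambda>\<close>, largest first.
  So it suffices to follow Sylvester's formula when a new smallest part \<open>c = 2a - 1\<close> is appended to a
  partition with \<open>l\<close> parts: the entries \<open>\<mu>\<^sub>1, \<dots>, \<mu>\<^sub>c\<close> grow by one, the later ones
  are unchanged, and if \<open>c \<ge> 2l + 1\<close> the new entries \<open>a - l\<close> and \<open>a - l - 1\<close> appear in positions
  \<open>2l + 1, 2l + 2\<close> (the second one only if it is nonzero). After doubling this is exactly \<open>I\<^sub>a\<close>: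
  the odd-position entries of \<open>2\<mu>\<close> are large enough for the scan of \<open>I\<^sub>a\<close> to pass the first
  \<open>min (a - 1, l)\<close> pairs, after which it either stops, adding 2 to the first \<open>c\<close> entries, or
  meets the zero padding and inserts the pair \<open>(2a - 2l, 2a - 2l - 2)\<close>.\<close>

text \<open>Sylvester's \<open>\<mu>\<^sub>i\<close> as a function of the position \<open>i\<close> alone, merging the formulas for
  \<open>i = 2j - 1\<close> and \<open>i = 2j\<close>; \<open>Syl\<close> truncates it at \<open>syl_length = 2d - \<epsilon>\<close>.\<close>
definition syl_entry :: "nat list \<Rightarrow> nat \<Rightarrow> int" where
  "syl_entry lam i = (if odd i
     then (int (Defs.part lam ((i + 1) div 2)) + 1) div 2 + int (conj_part lam i) - int i
     else (int (Defs.part lam (i div 2)) - 1) div 2 + int (conj_part lam (i + 1)) - int i + 1)"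

definition syl_length :: "nat list \<Rightarrow> nat" where
  "syl_length lam = 2 * syl_d lam - (if Defs.part lam (syl_d lam) = 2 * syl_d lam - 1 then 1 else 0)"

lemma concat_map_pair_upt:
  "concat (map (\<lambda>j. [f j, g j]) [1..<d + 1]) =
   map (\<lambda>i. if odd i then f ((i + 1) div 2) else g (i div 2)) [1..<2 * d + 1]"
proof (induction d)
  case (Suc d)
  have "[1..<2 * Suc d + 1] = [1..<2 * d + 1] @ [2 * d + 1, 2 * d + 2]"
    by (simp add: upt_conv_Cons)
  with Suc.IH show ?case by simp
qed simp

lemma concat_map_pair_upt_truncated:
  assumes "m = d \<or> m + 1 = d"
  shows "concat (map (\<lambda>j. [f j] @ (if j \<le> m then [g j] else [])) [1..<d + 1]) =
    map (\<lambda>i. if odd i then f ((i + 1) div 2) else g (i div 2)) [1..<2 * d - (if m < d then 1 else 0) + 1]"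
  using assms
proof
  assume "m = d"
  then have "map (\<lambda>j. [f j] @ (if j \<le> m then [g j] else [])) [1..<d + 1] =
      map (\<lambda>j. [f j, g j]) [1..<d + 1]"
    by simp
  with \<open>m = d\<close> show ?thesis
    using concat_map_pair_upt[of f g d] by (simp only: less_irrefl if_False diff_zero)
next
  assume md: "m + 1 = d"
  have "map (\<lambda>j. [f j] @ (if j \<le> m then [g j] else [])) [1..<d + 1] =
      map (\<lambda>j. [f j, g j]) [1..<m + 1] @ [[f d]]"
    using md by simp
  moreover have "[1..<2 * d - 1 + 1] = [1..<2 * m + 1] @ [2 * m + 1]"
  proof -
    have "2 * d - 1 + 1 = Suc (2 * m + 1)" using md by simp
    then show ?thesis by (simp only: upt_Suc_append[of 1 "2 * m + 1"])
  qed
  ultimately show ?thesis using concat_map_pair_upt[of f g m] md by simp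
qed

lemma Syl_eq_map_syl_entry: "Syl lam = map (\<lambda>i. nat (syl_entry lam i)) [1..<syl_length lam + 1]"
proof -
  define d where "d = syl_d lam"
  define eps where "eps = (if Defs.part lam d = 2 * d - 1 then 1 else 0 :: nat)"
  have m: "d - eps = d \<or> d - eps + 1 = d" unfolding eps_def by auto
  have L: "syl_length lam = 2 * d - (if d - eps < d then 1 else 0)"
    unfolding syl_length_def d_def[symmetric] eps_def by (cases d) auto
  show ?thesis
    unfolding Syl_def Let_def d_def[symmetric] eps_def[symmetric] concat_map_pair_upt_truncated[OF m] L
    by (intro map_cong refl) (auto simp: syl_entry_def elim!: oddE)
qed

lemma part_snoc:
  "Defs.part (xs @ [c]) j = (if j \<le> length xs then Defs.part xs j else if j = length xs + 1 then c else 0)"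
  by (auto simp: Defs.part_def nth_append)

lemma conj_part_snoc: "conj_part (xs @ [c]) i = conj_part xs i + (if i \<le> c then 1 else 0)"
  by (simp add: conj_part_def)

lemma conj_part_eq_length: "\<forall>x\<in>set xs. i \<le> x \<Longrightarrow> conj_part xs i = length xs"
  by (simp add: conj_part_def)

lemma part_lower_bound: "\<forall>x\<in>set xs. c \<le> x \<Longrightarrow> 1 \<le> j \<Longrightarrow> j \<le> length xs \<Longrightarrow> c \<le> Defs.part xs j"
  unfolding Defs.part_def by auto

lemma syl_entry_snoc:
  assumes "odd c" "1 \<le> i" "i \<le> 2 * length xs"
  shows "syl_entry (xs @ [c]) i = syl_entry xs i + (if i \<le> c then 1 else 0)"
proof (cases "odd i")
  case True
  then have "(i + 1) div 2 \<le> length xs" using assms by (auto elim!: oddE)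
  with True show ?thesis unfolding syl_entry_def part_snoc conj_part_snoc by simp
next
  case False
  then have "i div 2 \<le> length xs" "(i + 1 \<le> c) = (i \<le> c)" using assms by auto presburger
  with False show ?thesis unfolding syl_entry_def part_snoc conj_part_snoc by simp
qed

lemma syl_entry_odd_lower_bound:
  assumes "\<forall>x\<in>set xs. c \<le> x" "j + 1 \<le> length xs" "2 * j + 1 \<le> c"
  shows "int ((c + 1) div 2) + int (length xs) - 2 * int j - 1 \<le> syl_entry xs (2 * j + 1)"
proof -
  have "c \<le> Defs.part xs (j + 1)" using part_lower_bound[OF assms(1)] assms(2) by simp
  then have "(int c + 1) div 2 \<le> (int (Defs.part xs (j + 1)) + 1) div 2" by (intro zdiv_mono1) auto
  moreover have "conj_part xs (2 * j + 1) = length xs" using assms(1,3) by (intro conj_part_eq_length) auto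
  ultimately show ?thesis unfolding syl_entry_def by simp
qed

lemma syl_entry_snoc_new_odd:
  assumes "\<forall>x\<in>set xs. c \<le> x" "2 * length xs + 1 \<le> c"
  shows "syl_entry (xs @ [c]) (2 * length xs + 1) = (int c + 1) div 2 - int (length xs)"
proof -
  have "conj_part xs (2 * length xs + 1) = length xs"
    using assms by (intro conj_part_eq_length) auto
  then have "conj_part (xs @ [c]) (2 * length xs + 1) = length xs + 1"
    using assms unfolding conj_part_snoc by simp
  then show ?thesis unfolding syl_entry_def by (simp add: part_snoc)
qed

lemma syl_entry_snoc_new_even:
  assumes "\<forall>x\<in>set xs. c \<le> x" "2 * length xs + 3 \<le> c"
  shows "syl_entry (xs @ [c]) (2 * length xs + 2) = (int c - 1) div 2 - int (length xs)"
proof -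
  have "conj_part xs (2 * length xs + 3) = length xs"
    using assms by (intro conj_part_eq_length) auto
  then have "conj_part (xs @ [c]) (2 * length xs + 3) = length xs + 1"
    using assms unfolding conj_part_snoc by simp
  then show ?thesis unfolding syl_entry_def by (simp add: part_snoc numeral_3_eq_3)
qed

lemma finite_syl_d_candidates: "finite ({0} \<union> {j. 1 \<le> j \<and> j \<le> length lam \<and> 2 * j - 1 \<le> Defs.part lam j})"
  by (rule finite_subset[of _ "{0..length lam}"]) auto

lemma syl_d_le_length: "syl_d lam \<le> length lam"
  unfolding syl_d_def using finite_syl_d_candidates[of lam] by (subst Max_le_iff) auto

lemma syl_d_greatest: "1 \<le> j \<Longrightarrow> j \<le> length lam \<Longrightarrow> 2 * j - 1 \<le> Defs.part lam j \<Longrightarrow> j \<le> syl_d lam"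
  unfolding syl_d_def using finite_syl_d_candidates[of lam] by (intro Max_ge) auto

lemma syl_length_le: "syl_length lam \<le> 2 * length lam"
  using syl_d_le_length[of lam] unfolding syl_length_def by simp

lemma syl_length_snoc_large:
  assumes "\<forall>x\<in>set xs. c \<le> x" "2 * length xs + 1 \<le> c"
  shows "syl_length xs = 2 * length xs"
    and "syl_length (xs @ [c]) = 2 * length xs + 2 - (if c = 2 * length xs + 1 then 1 else 0)"
proof -
  define l where "l = length xs"
  have last_part: "c \<le> Defs.part xs l" if "1 \<le> l"
    using part_lower_bound[OF assms(1) that] by (simp add: l_def)
  have "l \<le> syl_d xs"
  proof (cases "l = 0")
    case False
    then have "c \<le> Defs.part xs l" using last_part by simp
    then have "2 * l - 1 \<le> Defs.part xs l" using assms(2) by (simp add: l_def)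
    with False show ?thesis by (intro syl_d_greatest) (auto simp: l_def Suc_le_eq)
  qed simp
  then have d: "syl_d xs = l" using syl_d_le_length[of xs] by (simp add: l_def)
  show "syl_length xs = 2 * length xs"
    using assms(2) last_part unfolding syl_length_def d l_def[symmetric] by (cases "l = 0") auto
  have "l + 1 \<le> syl_d (xs @ [c])"
    using assms(2) by (intro syl_d_greatest) (auto simp: l_def part_snoc)
  then have "syl_d (xs @ [c]) = l + 1" using syl_d_le_length[of "xs @ [c]"] by (simp add: l_def)
  then show "syl_length (xs @ [c]) = 2 * length xs + 2 - (if c = 2 * length xs + 1 then 1 else 0)"
    unfolding syl_length_def by (simp add: part_snoc l_def)
qed

lemma syl_length_snoc_small:
  assumes "odd c" "\<forall>x\<in>set xs. c \<le> x" "c < 2 * length xs + 1"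
  shows "syl_length (xs @ [c]) = syl_length xs" and "c \<le> syl_length xs"
proof -
  have "{j. 1 \<le> j \<and> j \<le> length (xs @ [c]) \<and> 2 * j - 1 \<le> Defs.part (xs @ [c]) j} =
      {j. 1 \<le> j \<and> j \<le> length xs \<and> 2 * j - 1 \<le> Defs.part xs j}"
    using assms(3) by (auto simp: part_snoc)
  then have d: "syl_d (xs @ [c]) = syl_d xs" unfolding syl_d_def by simp
  then show "syl_length (xs @ [c]) = syl_length xs"
    unfolding syl_length_def using syl_d_le_length[of xs] by (simp add: part_snoc)
  define a where "a = (c + 1) div 2"
  have a: "c = 2 * a - 1" "1 \<le> a" using assms(1) by (auto simp: a_def elim!: oddE)
  have "a \<le> syl_d xs"
    using assms(3) a part_lower_bound[OF assms(2), of a] by (intro syl_d_greatest) auto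
  then show "c \<le> syl_length xs" using a unfolding syl_length_def by (simp split: if_split) linarith
qed

declare ins_aux.simps [simp del]

lemma ins_aux_stop: "a \<le> j + 1 \<Longrightarrow> ins_aux a j g = map (\<lambda>x. x + 2) (take (2 * j + 1) g) @ drop (2 * j + 1) g"
  by (subst ins_aux.simps) simp

lemma ins_aux_insert:
  "j + 1 < a \<Longrightarrow> g ! (2 * j) < 2 * a - 2 * j - 2 \<Longrightarrow>
   ins_aux a j g = map (\<lambda>x. x + 2) (take (2 * j) g) @ [2 * a - 2 * j, 2 * a - 2 * j - 2] @ drop (2 * j) g"
  by (subst ins_aux.simps) simp

lemma ins_aux_skip:
  assumes "J < a" "j0 \<le> J" "\<forall>j. j0 \<le> j \<and> j < J \<longrightarrow> g ! (2 * j) \<ge> 2 * a - 2 * j - 2"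
  shows "ins_aux a j0 g = ins_aux a J g"
  using assms
proof (induction "J - j0" arbitrary: j0)
  case (Suc k)
  then have "j0 < J" by simp
  moreover have "2 * a - 2 * j0 - 2 \<le> g ! (2 * j0)" using Suc.prems(3) \<open>j0 < J\<close> by simp
  ultimately have "ins_aux a j0 g = ins_aux a (j0 + 1) g"
    using Suc.prems(1) by (subst ins_aux.simps) simp
  also have "\<dots> = ins_aux a J g"
    using Suc.hyps(1)[of "j0 + 1"] Suc.hyps(2) Suc.prems \<open>j0 < J\<close> by simp
  finally show ?case .
qed simp

lemma Ins_eq_of_ins_aux:
  assumes "ins_aux a 0 (gam @ replicate (2 * a + 2) 0) = T @ replicate k 0" "0 \<notin> set T"
  shows "Ins a gam = T"
proof -
  have "filter (\<lambda>x. x \<noteq> 0) (T @ replicate k 0) = T"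
    using assms(2) by (simp add: filter_id_conv) (metis gr0I)
  then show ?thesis unfolding Ins_def assms(1) .
qed

lemma zero_notin_Ins: "0 \<notin> set (Ins a gam)"
  unfolding Ins_def by simp

lemma zero_notin_foldl_Ins: "0 \<notin> set gam \<Longrightarrow> 0 \<notin> set (foldl (\<lambda>gam x. Ins (f x) gam) gam xs)"
  by (induction xs arbitrary: gam) (simp_all add: zero_notin_Ins)

lemma map_upt_add_prefix:
  "n \<le> L \<Longrightarrow> map (\<lambda>x. x + (k :: nat)) (take n (map h [1..<L + 1])) @ drop n (map h [1..<L + 1]) =
    map (\<lambda>i. h i + (if i \<le> n then k else 0)) [1..<L + 1]"
  by (rule nth_equalityI) (auto simp: nth_append min_def)

definition double_syl_entry :: "nat list \<Rightarrow> nat \<Rightarrow> nat" where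
  "double_syl_entry lam i = 2 * nat (syl_entry lam i)"

lemma double_Syl_eq: "map (\<lambda>x. 2 * x) (Syl lam) = map (double_syl_entry lam) [1..<syl_length lam + 1]"
  unfolding Syl_eq_map_syl_entry double_syl_entry_def by simp

lemma double_syl_entry_pos:
  assumes "0 \<notin> set (Syl lam)" "1 \<le> i" "i \<le> syl_length lam"
  shows "0 < double_syl_entry lam i"
proof -
  have "nat (syl_entry lam i) \<in> set (Syl lam)"
    unfolding Syl_eq_map_syl_entry using assms(2,3) by (force simp del: upt_Suc)
  then show ?thesis using assms(1) unfolding double_syl_entry_def by (metis gr0I mult_pos_pos zero_less_numeral)
qed

lemma double_syl_entry_snoc:
  assumes "odd c" "0 \<notin> set (Syl xs)" "1 \<le> i" "i \<le> syl_length xs"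
  shows "double_syl_entry (xs @ [c]) i = double_syl_entry xs i + (if i \<le> c then 2 else 0)"
proof -
  have "0 < syl_entry xs i"
    using double_syl_entry_pos[OF assms(2-4)] unfolding double_syl_entry_def by simp
  moreover have "i \<le> 2 * length xs" using assms(4) syl_length_le[of xs] by simp
  ultimately show ?thesis
    using syl_entry_snoc[OF assms(1,3)] unfolding double_syl_entry_def by (simp add: nat_add_distrib)
qed

lemma double_syl_entry_snoc_pos:
  assumes "odd c" "0 \<notin> set (Syl xs)" "1 \<le> i" "i \<le> syl_length xs"
  shows "0 < double_syl_entry (xs @ [c]) i"
  using double_syl_entry_snoc[OF assms] double_syl_entry_pos[OF assms(2-4)] by simp

lemma ins_aux_double_Syl_skip:
  assumes "c = 2 * a - 1" "\<forall>x\<in>set xs. c \<le> x" "2 * J \<le> syl_length xs" "J \<le> length xs" "J < a"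
  shows "ins_aux a 0 (map (\<lambda>x. 2 * x) (Syl xs) @ R) = ins_aux a J (map (\<lambda>x. 2 * x) (Syl xs) @ R)"
proof (rule ins_aux_skip)
  show "\<forall>j. 0 \<le> j \<and> j < J \<longrightarrow> (map (\<lambda>x. 2 * x) (Syl xs) @ R) ! (2 * j) \<ge> 2 * a - 2 * j - 2"
  proof (intro allI impI)
    fix j assume "0 \<le> j \<and> j < J"
    then have j: "j < J" by simp
    have "(map (\<lambda>x. 2 * x) (Syl xs) @ R) ! (2 * j) = double_syl_entry xs (2 * j + 1)"
      unfolding double_Syl_eq using j assms(3) by (simp add: nth_append del: upt_Suc)
    moreover have "(c + 1) div 2 = a" using assms(1,5) by simp
    moreover have "int ((c + 1) div 2) + int (length xs) - 2 * int j - 1 \<le> syl_entry xs (2 * j + 1)"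
      using syl_entry_odd_lower_bound[OF assms(2), of j] j assms(1,4,5) by simp
    ultimately show "(map (\<lambda>x. 2 * x) (Syl xs) @ R) ! (2 * j) \<ge> 2 * a - 2 * j - 2"
      using j assms(4) unfolding double_syl_entry_def by linarith
  qed
qed (use assms in simp_all)

lemma Ins_double_Syl_snoc_small:
  assumes "c = 2 * a - 1" "1 \<le> a" "\<forall>x\<in>set xs. c \<le> x" "0 \<notin> set (Syl xs)"
    and "c < 2 * length xs + 1"
  shows "Ins a (map (\<lambda>x. 2 * x) (Syl xs)) = map (\<lambda>x. 2 * x) (Syl (xs @ [c]))"
proof -
  define L where "L = syl_length xs"
  define R where "R = replicate (2 * a + 2) (0 :: nat)"
  let ?G = "map (double_syl_entry xs) [1..<L + 1]"
  let ?G' = "map (double_syl_entry (xs @ [c])) [1..<L + 1]"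
  have odd_c: "odd c" using assms(1,2) by presburger
  have cL: "c \<le> L" using syl_length_snoc_small(2)[OF odd_c assms(3,5)] by (simp add: L_def)
  have "ins_aux a 0 (map (\<lambda>x. 2 * x) (Syl xs) @ R) = ins_aux a (a - 1) (map (\<lambda>x. 2 * x) (Syl xs) @ R)"
    using assms cL by (intro ins_aux_double_Syl_skip) (auto simp: L_def)
  also have "\<dots> = map (\<lambda>x. x + 2) (take c ?G) @ drop c ?G @ R"
  proof -
    have "2 * (a - 1) + 1 = c" using assms(1,2) by simp
    then show ?thesis using cL unfolding double_Syl_eq L_def[symmetric] by (simp add: ins_aux_stop del: upt_Suc)
  qed
  also have "\<dots> = ?G' @ R"
  proof -
    have "?G' = map (\<lambda>i. double_syl_entry xs i + (if i \<le> c then 2 else 0)) [1..<L + 1]"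
      using double_syl_entry_snoc[OF odd_c assms(4)] by (intro map_cong) (auto simp: L_def)
    then show ?thesis using map_upt_add_prefix[OF cL, of 2] by simp
  qed
  finally have "ins_aux a 0 (map (\<lambda>x. 2 * x) (Syl xs) @ R) = ?G' @ R" .
  moreover have "0 \<notin> set ?G'"
    using double_syl_entry_snoc_pos[OF odd_c assms(4)] by (force simp: L_def simp del: upt_Suc)
  ultimately have "Ins a (map (\<lambda>x. 2 * x) (Syl xs)) = ?G'"
    unfolding R_def by (rule Ins_eq_of_ins_aux)
  then show ?thesis
    unfolding double_Syl_eq syl_length_snoc_small(1)[OF odd_c assms(3,5)] L_def .
qed

lemma double_Syl_snoc_large_prefix:
  assumes "odd c" "\<forall>x\<in>set xs. c \<le> x" "0 \<notin> set (Syl xs)" "2 * length xs + 1 \<le> c"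
  shows "map (double_syl_entry (xs @ [c])) [1..<2 * length xs + 1] = map (\<lambda>x. 2 * x + 2) (Syl xs)"
proof -
  have "map (\<lambda>x. 2 * x + 2) (Syl xs) = map (\<lambda>x. x + 2) (map (\<lambda>x. 2 * x) (Syl xs))" by simp
  also have "\<dots> = map (\<lambda>i. double_syl_entry xs i + 2) [1..<2 * length xs + 1]"
    unfolding double_Syl_eq syl_length_snoc_large(1)[OF assms(2,4)] by simp
  also have "\<dots> = map (double_syl_entry (xs @ [c])) [1..<2 * length xs + 1]"
    using double_syl_entry_snoc[OF assms(1,3)] syl_length_snoc_large(1)[OF assms(2,4)] assms(4)
    by (intro map_cong) auto
  finally show ?thesis ..
qed

lemma Ins_double_Syl_snoc_boundary:
  assumes "c = 2 * a - 1" "\<forall>x\<in>set xs. c \<le> x" "0 \<notin> set (Syl xs)" "c = 2 * length xs + 1"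
  shows "Ins a (map (\<lambda>x. 2 * x) (Syl xs)) = map (\<lambda>x. 2 * x) (Syl (xs @ [c]))"
proof -
  define l where "l = length xs"
  have a: "a = l + 1" using assms(1,4) by (simp add: l_def)
  have odd_c: "odd c" and large: "2 * length xs + 1 \<le> c" using assms(4) by simp_all
  have L: "syl_length xs = 2 * l" using syl_length_snoc_large(1)[OF assms(2) large] by (simp add: l_def)
  have new: "double_syl_entry (xs @ [c]) (2 * l + 1) = 2"
    using syl_entry_snoc_new_odd[OF assms(2) large] assms(4) unfolding double_syl_entry_def l_def by simp
  have "ins_aux a 0 (map (\<lambda>x. 2 * x) (Syl xs) @ replicate (2 * a + 2) 0)
      = ins_aux a l (map (\<lambda>x. 2 * x) (Syl xs) @ replicate (2 * a + 2) 0)"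
    using assms(1,2) L a by (intro ins_aux_double_Syl_skip) (auto simp: l_def)
  also have "\<dots> = map (\<lambda>x. 2 * x + 2) (Syl xs) @ [2] @ replicate (2 * a + 1) 0"
    using a L by (simp add: ins_aux_stop Syl_eq_map_syl_entry del: upt_Suc)
  also have "\<dots> = map (double_syl_entry (xs @ [c])) [1..<2 * l + 2] @ replicate (2 * a + 1) 0"
    using double_Syl_snoc_large_prefix[OF odd_c assms(2,3) large] new by (simp add: l_def)
  finally have "ins_aux a 0 (map (\<lambda>x. 2 * x) (Syl xs) @ replicate (2 * a + 2) 0)
      = map (double_syl_entry (xs @ [c])) [1..<2 * l + 2] @ replicate (2 * a + 1) 0" .
  moreover have "0 \<notin> set (map (double_syl_entry (xs @ [c])) [1..<2 * l + 2])"
    using double_Syl_snoc_large_prefix[OF odd_c assms(2,3) large] new by (auto simp: l_def)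
  ultimately have "Ins a (map (\<lambda>x. 2 * x) (Syl xs)) = map (double_syl_entry (xs @ [c])) [1..<2 * l + 2]"
    by (rule Ins_eq_of_ins_aux)
  moreover have "syl_length (xs @ [c]) = 2 * l + 1"
    using syl_length_snoc_large(2)[OF assms(2) large] assms(4) by (simp add: l_def)
  ultimately show ?thesis unfolding double_Syl_eq by simp
qed

lemma Ins_double_Syl_snoc_large:
  assumes "c = 2 * a - 1" "\<forall>x\<in>set xs. c \<le> x" "0 \<notin> set (Syl xs)" "2 * length xs + 3 \<le> c"
  shows "Ins a (map (\<lambda>x. 2 * x) (Syl xs)) = map (\<lambda>x. 2 * x) (Syl (xs @ [c]))"
proof -
  define l where "l = length xs"
  define R where "R = replicate (2 * a + 2) (0 :: nat)"
  have a: "l + 2 \<le> a" using assms(1,4) by (simp add: l_def)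
  have odd_c: "odd c" using assms(1,4) by presburger
  have large: "2 * length xs + 1 \<le> c" using assms(4) by simp
  have L: "syl_length xs = 2 * l" using syl_length_snoc_large(1)[OF assms(2) large] by (simp add: l_def)
  have new: "double_syl_entry (xs @ [c]) (2 * l + 1) = 2 * a - 2 * l"
    "double_syl_entry (xs @ [c]) (2 * l + 2) = 2 * a - 2 * l - 2"
    using syl_entry_snoc_new_odd[OF assms(2) large] syl_entry_snoc_new_even[OF assms(2,4)] assms(1) a
    unfolding double_syl_entry_def l_def by auto
  have "ins_aux a 0 (map (\<lambda>x. 2 * x) (Syl xs) @ R) = ins_aux a l (map (\<lambda>x. 2 * x) (Syl xs) @ R)"
    using assms(1,2) L a by (intro ins_aux_double_Syl_skip) (auto simp: l_def)
  also have "\<dots> = map (\<lambda>x. 2 * x + 2) (Syl xs) @ [2 * a - 2 * l, 2 * a - 2 * l - 2] @ R"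
    using a L by (simp add: ins_aux_insert Syl_eq_map_syl_entry R_def nth_append del: upt_Suc)
  also have "\<dots> = map (double_syl_entry (xs @ [c])) [1..<2 * l + 3] @ R"
  proof -
    have "[1..<2 * l + 3] = [1..<2 * l + 1] @ [2 * l + 1, 2 * l + 2]" by (simp add: numeral_3_eq_3)
    then show ?thesis
      using double_Syl_snoc_large_prefix[OF odd_c assms(2,3) large] new by (simp add: l_def del: upt_Suc)
  qed
  finally have "ins_aux a 0 (map (\<lambda>x. 2 * x) (Syl xs) @ R) = map (double_syl_entry (xs @ [c])) [1..<2 * l + 3] @ R" .
  moreover have "0 \<notin> set (map (double_syl_entry (xs @ [c])) [1..<2 * l + 3])"
    using double_Syl_snoc_large_prefix[OF odd_c assms(2,3) large] new a by (auto simp: numeral_3_eq_3 l_def)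
  ultimately have "Ins a (map (\<lambda>x. 2 * x) (Syl xs)) = map (double_syl_entry (xs @ [c])) [1..<2 * l + 3]"
    unfolding R_def by (rule Ins_eq_of_ins_aux)
  moreover have "syl_length (xs @ [c]) + 1 = 2 * l + 3"
    using syl_length_snoc_large(2)[OF assms(2) large] assms(4) by (simp add: l_def)
  ultimately show ?thesis by (simp only: double_Syl_eq[of "xs @ [c]"])
qed

lemma Ins_double_Syl_snoc:
  assumes "odd c" "\<forall>x\<in>set xs. c \<le> x" "0 \<notin> set (Syl xs)"
  shows "Ins ((c + 1) div 2) (map (\<lambda>x. 2 * x) (Syl xs)) = map (\<lambda>x. 2 * x) (Syl (xs @ [c]))"
proof -
  have a: "c = 2 * ((c + 1) div 2) - 1" "1 \<le> (c + 1) div 2" using assms(1) by (auto elim!: oddE)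
  have "c < 2 * length xs + 1 \<or> c = 2 * length xs + 1 \<or> 2 * length xs + 3 \<le> c"
    using assms(1) by presburger
  then consider "c < 2 * length xs + 1" | "c = 2 * length xs + 1" | "2 * length xs + 3 \<le> c"
    by blast
  then show ?thesis
  proof cases
    case 1 then show ?thesis using Ins_double_Syl_snoc_small[OF a assms(2,3)] by simp
  next
    case 2 then show ?thesis using Ins_double_Syl_snoc_boundary[OF a(1) assms(2,3)] by simp
  next
    case 3 then show ?thesis using Ins_double_Syl_snoc_large[OF a(1) assms(2,3)] by simp
  qed
qed

lemma Syl_Nil: "Syl [] = []"
  using syl_length_le[of "[]"] by (simp add: Syl_eq_map_syl_entry)

lemma foldl_Ins_eq_double_Syl:
  "sorted_wrt (\<ge>) lam \<Longrightarrow> \<forall>x\<in>set lam. odd x \<Longrightarrow>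
   foldl (\<lambda>gam x. Ins ((x + 1) div 2) gam) [] lam = map (\<lambda>x. 2 * x) (Syl lam)"
proof (induction lam rule: rev_induct)
  case (snoc c xs)
  have "sorted_wrt (\<ge>) xs" and smallest: "\<forall>x\<in>set xs. c \<le> x"
    using snoc.prems(1) by (auto simp: sorted_wrt_append)
  then have IH: "foldl (\<lambda>gam x. Ins ((x + 1) div 2) gam) [] xs = map (\<lambda>x. 2 * x) (Syl xs)"
    using snoc by simp
  have "0 \<notin> set (map (\<lambda>x. 2 * x) (Syl xs))"
    using zero_notin_foldl_Ins[of "[]"] unfolding IH[symmetric] by simp
  then have "0 \<notin> set (Syl xs)" by force
  then show ?case using Ins_double_Syl_snoc[OF _ smallest] snoc.prems(2) IH by simp
qed (simp add: Syl_Nil)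

lemma psquare_simps: "psquare [] = []" "psquare (x # xs) = x # x # psquare xs"
  by (simp_all add: psquare_def)

lemma set_psquare: "set (psquare lam) = set lam"
  by (auto simp: psquare_def)

lemma sum_list_psquare: "sum_list (psquare lam) = 2 * sum_list lam"
  by (induction lam) (simp_all add: psquare_def)

lemma count_list_psquare: "count_list (psquare lam) i = 2 * count_list lam i"
  by (induction lam) (simp_all add: psquare_def)

lemma sorted_wrt_psquare: "sorted_wrt (\<ge>) lam \<Longrightarrow> sorted_wrt (\<ge>) (psquare lam)"
  by (induction lam) (auto simp: psquare_simps set_psquare)

lemma psquare_OddParts: "lam \<in> OddParts n \<Longrightarrow> psquare lam \<in> OddParts (2 * n)"
  by (simp add: OddParts_def partitions_def set_psquare sum_list_psquare sorted_wrt_psquare)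

lemma phi_beta_psquare: "phi_beta (psquare lam) = []"
  unfolding phi_beta_def by (simp add: count_list_psquare filter_empty_conv)

lemma count_mset_concat_replicate:
  "distinct zs \<Longrightarrow> count (mset (concat (map (\<lambda>i. replicate (k i) i) zs))) x = (if x \<in> set zs then k x else 0)"
  by (induction zs) auto

lemma phi_alpha_psquare:
  assumes "sorted_wrt (\<ge>) lam"
  shows "phi_alpha (psquare lam) = lam"
proof -
  let ?alpha = "concat (map (\<lambda>i. replicate (count_list (psquare lam) i div 2) i) (remdups (psquare lam)))"
  have "mset (rev lam) = mset ?alpha"
    by (rule multiset_eqI, subst count_mset_concat_replicate)
      (auto simp: count_list_psquare set_psquare count_mset count_list_0_iff)
  moreover have "sorted (rev lam)" using assms by (simp add: sorted_wrt_rev)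
  ultimately have "sort ?alpha = rev lam" by (rule properties_for_sort)
  then show ?thesis unfolding phi_alpha_def by simp
qed

lemma Bress_Nil: "Bress [] = []"
  unfolding Bress_def bress_pairs_def by (subst while_unfold) simp

theorem mainTheorem3:
  fixes n :: nat and lam :: "nat list"
  assumes "1 \<le> n" and "lam \<in> OddParts n"
  shows "psquare lam \<in> OddParts (2 * n) \<and> Phi (psquare lam) = map (\<lambda>x. 2 * x) (Syl lam)"
proof
  show "psquare lam \<in> OddParts (2 * n)" using assms(2) by (rule psquare_OddParts)
  have sorted: "sorted_wrt (\<ge>) lam" and odd: "\<forall>x\<in>set lam. odd x"
    using assms(2) by (auto simp: OddParts_def partitions_def)
  show "Phi (psquare lam) = map (\<lambda>x. 2 * x) (Syl lam)"
    unfolding Phi_def phi_beta_psquare Bress_Nil phi_alpha_psquare[OF sorted]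
    by (rule foldl_Ins_eq_double_Syl[OF sorted odd])
qed

end
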